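(* Let $\mathcal{X}=\mathcal{X}^{(1)}\times\cdots\times\mathcal{X}^{(d)}$ with each $\mathcal{X}^{(i)}$ finite, $P\in\mathcal{L}(\mathcal{X})$, and $L_i\in\mathcal{L}(\mathcal{X}^{(i)})$ for $i=1,\dots,d$. 1. (Pythagorean identity) If $\pi\in\mathcal{P}(\mathcal{X})$ is positive, then $D^\pi_{KL}(P\|\otimes_{i=1}^dL_i)=D^\pi_{KL}(P\|\otimes_{i=1}^dP^{(i)}_\pi)+D^\pi_{KL}(\otimes_{i=1}^dP^{(i)}_\pi\|\otimes_{i=1}^dL_i)=D^\pi_{KL}(P\|\otimes_{i=1}^dP^{(i)}_\pi)+\sum_{i=1}^dD^{\pi^{(i)}}_{KL}(P^{(i)}_\pi\|L_i)$, where $\pi^{(i)}$ is the $i$th marginal of $\pi$. In particular $\otimes_{i=1}^dP^{(i)}_\pi$ is the unique minimizer of $(L_1,\dots,L_d)\mapsto D^\pi_{KL}(P\|\otimes_iL_i)$, and $\mathbb{I}^\pi(P)=D^\pi_{KL}(P\|\otimes_{i=1}^dP^{(i)}_\pi)$. 2. (Bisection) If $\pi=\otimes_{i=1}^d\pi^{(i)}$ is a positive product distribution and $P$ is $\pi$-stationary, then $\mathbb{I}^\pi(P)=\mathbb{I}^\pi(P^* )$.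
   Context: $\mathcal{P}(\Omega),\mathcal{L}(\Omega)$: probability masses and transition matrices on finite $\Omega$. $D_{KL}^{\pi}(M\|L):=\sum_{x,y}\pi(x)M(x,y)\ln\frac{M(x,y)}{L(x,y)}$ (value $+\infty$ if $M(x,y)>0=L(x,y)$ for some $x$ with $\pi(x)>0$; $0\ln(0/0)=0$). $(\otimes_iL_i)(x,y)=\prod_iL_i(x^i,y^i)$. $\mathbb{I}^\pi(P):=\min_{L_i\in\mathcal{L}(\mathcal{X}^{(i)})}D^\pi_{KL}(P\|\otimes_{i=1}^dL_i)$. For positive $\pi$, the $i$th marginal transition matrix is $P^{(i)}_\pi(x^i,y^i):=\frac{\sum_{x^j,y^j,\,j\ne i}\pi(x)P(x,y)}{\pi^{(i)}(x^i)}$ where the sum is over all coordinates $j\neq i$ of $x=(x^1,\dots,x^d)$ and $y=(y^1,\dots,y^d)$. For $\pi$-stationary $P$, $P^*(x,y)=\frac{\pi(y)}{\pi(x)}P(y,x)$. *)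

theory Defs
  imports "HOL-Analysis.Analysis"
begin

definition stoch :: "'b set \<Rightarrow> ('b \<Rightarrow> 'b \<Rightarrow> real) \<Rightarrow> bool" where
  "stoch A M \<longleftrightarrow> (\<forall>x\<in>A. \<forall>y\<in>A. 0 \<le> M x y) \<and> (\<forall>x\<in>A. (\<Sum>y\<in>A. M x y) = 1)"

definition pmass :: "'b set \<Rightarrow> ('b \<Rightarrow> real) \<Rightarrow> bool" where
  "pmass A p \<longleftrightarrow> (\<forall>x\<in>A. 0 \<le> p x) \<and> (\<Sum>x\<in>A. p x) = 1"

definition KL :: "'b set \<Rightarrow> ('b \<Rightarrow> real) \<Rightarrow> ('b \<Rightarrow> 'b \<Rightarrow> real) \<Rightarrow> ('b \<Rightarrow> 'b \<Rightarrow> real) \<Rightarrow> ereal" where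
  "KL A \<pi> M L =
    (if \<exists>x\<in>A. \<exists>y\<in>A. 0 < \<pi> x \<and> 0 < M x y \<and> L x y = 0 then \<infinity>
     else ereal (\<Sum>x\<in>A. \<Sum>y\<in>A.
              if \<pi> x = 0 \<or> M x y = 0 then 0 else \<pi> x * M x y * ln (M x y / L x y)))"

text \<open>Product state space X = X^(1) x ... x X^(d), coordinates indexed by 0..<d.\<close>
definition prodspace :: "nat \<Rightarrow> (nat \<Rightarrow> 'a set) \<Rightarrow> (nat \<Rightarrow> 'a) set" where
  "prodspace d S = PiE {..<d} S"

definition tensor :: "nat \<Rightarrow> (nat \<Rightarrow> 'a \<Rightarrow> 'a \<Rightarrow> real) \<Rightarrow> (nat \<Rightarrow> 'a) \<Rightarrow> (nat \<Rightarrow> 'a) \<Rightarrow> real" where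
  "tensor d Ls x y = (\<Prod>i<d. Ls i (x i) (y i))"

definition marg :: "nat \<Rightarrow> (nat \<Rightarrow> 'a set) \<Rightarrow> ((nat \<Rightarrow> 'a) \<Rightarrow> real) \<Rightarrow> nat \<Rightarrow> 'a \<Rightarrow> real" where
  "marg d S \<pi> i a = (\<Sum>x\<in>{x\<in>prodspace d S. x i = a}. \<pi> x)"

definition margP :: "nat \<Rightarrow> (nat \<Rightarrow> 'a set) \<Rightarrow> ((nat \<Rightarrow> 'a) \<Rightarrow> real)
    \<Rightarrow> ((nat \<Rightarrow> 'a) \<Rightarrow> (nat \<Rightarrow> 'a) \<Rightarrow> real) \<Rightarrow> nat \<Rightarrow> 'a \<Rightarrow> 'a \<Rightarrow> real" where
  "margP d S \<pi> P i a b =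
     (\<Sum>x\<in>prodspace d S. \<Sum>y\<in>prodspace d S.
        if x i = a \<and> y i = b then \<pi> x * P x y else 0) / marg d S \<pi> i a"

definition Iinfo :: "nat \<Rightarrow> (nat \<Rightarrow> 'a set) \<Rightarrow> ((nat \<Rightarrow> 'a) \<Rightarrow> real)
    \<Rightarrow> ((nat \<Rightarrow> 'a) \<Rightarrow> (nat \<Rightarrow> 'a) \<Rightarrow> real) \<Rightarrow> ereal" where
  "Iinfo d S \<pi> P = Inf {KL (prodspace d S) \<pi> P (tensor d Ls) | Ls. \<forall>i<d. stoch (S i) (Ls i)}"

text \<open>Time reversal P^* with respect to pi.\<close>
definition dual :: "('b \<Rightarrow> real) \<Rightarrow> ('b \<Rightarrow> 'b \<Rightarrow> real) \<Rightarrow> 'b \<Rightarrow> 'b \<Rightarrow> real" where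
  "dual \<pi> P x y = \<pi> y / \<pi> x * P y x"

definition stationary :: "'b set \<Rightarrow> ('b \<Rightarrow> real) \<Rightarrow> ('b \<Rightarrow> 'b \<Rightarrow> real) \<Rightarrow> bool" where
  "stationary A \<pi> P \<longleftrightarrow> (\<forall>y\<in>A. (\<Sum>x\<in>A. \<pi> x * P x y) = \<pi> y)"

end

(* For a nonnegative kernel Q on the product space with marginal kernels Q^(i) = Q^(i)_pi, on the
   support of Q we have ln (Q / tensor L) = ln (Q / tensor Q^(.)) + sum_i ln (Q^(i) / L_i), and
   summing a function of the i-th coordinate pair (x^i, y^i) against pi(x) Q(x,y) only sees
   pi^(i)(a) Q^(i)(a,b). Hence D(Q || tensor L) = D(Q || tensor Q^(.)) + sum_i D(Q^(i) || L_i).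
   For Q = P this is the second form of the identity; for Q = tensor M with M_i = P^(i)_pi, whose
   marginals are the M_i themselves, it identifies the sum with D(tensor M || tensor L). Gibbs'
   inequality then makes tensor M the unique minimiser.
   For bisection, the marginals of P* are the time reversals of the M_i with respect to pi^(i),
   so for product pi the tensor of the marginals of P* is (tensor M)*, and time reversal with
   respect to pi preserves D^pi. *)

theory Submission
  imports Defs
begin

lemma diff_le_mult_ln_div:
  fixes p q :: real
  assumes "0 \<le> p" "0 \<le> q" "0 < p \<Longrightarrow> 0 < q"
  shows "p - q \<le> p * ln (p / q)"
proof (cases "p = 0")
  case False
  then have "0 < p" "0 < q" using assms by auto
  then have "p * ln (q / p) \<le> p * (q / p - 1)"
    by (intro mult_left_mono ln_le_minus_one) auto
  moreover have "p * (q / p - 1) = q - p" using \<open>0 < p\<close> by (simp add: field_simps)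
  moreover have "ln (p / q) = - ln (q / p)" using \<open>0 < p\<close> \<open>0 < q\<close> by (simp add: ln_div)
  ultimately show ?thesis by simp
qed (use assms in simp)

lemma mult_ln_div_eq_diff_imp_eq:
  fixes p q :: real
  assumes "0 \<le> p" "0 \<le> q" "0 < p \<Longrightarrow> 0 < q" "p * ln (p / q) = p - q"
  shows "p = q"
proof (cases "p = 0")
  case False
  then have "0 < p" "0 < q" using assms by auto
  have "ln (p / q) = - ln (q / p)" using \<open>0 < p\<close> \<open>0 < q\<close> by (simp add: ln_div)
  moreover have "p * (q / p - 1) = q - p" using \<open>0 < p\<close> by (simp add: field_simps)
  ultimately have "p * ln (q / p) = p * (q / p - 1)" using assms(4) by simp
  then have "ln (q / p) = q / p - 1" using \<open>0 < p\<close> by simp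
  then have "q / p = 1" using \<open>0 < p\<close> \<open>0 < q\<close> by (intro ln_eq_minus_one) auto
  then show ?thesis using \<open>0 < p\<close> by simp
qed (use assms in simp)

lemma gibbs_inequality:
  fixes p q :: "'b \<Rightarrow> real"
  assumes "finite B" "\<forall>b\<in>B. 0 \<le> p b" "\<forall>b\<in>B. 0 \<le> q b" "sum p B = 1" "sum q B = 1"
    and "\<forall>b\<in>B. 0 < p b \<longrightarrow> 0 < q b"
  shows "0 \<le> (\<Sum>b\<in>B. p b * ln (p b / q b))"
    and "(\<Sum>b\<in>B. p b * ln (p b / q b)) = 0 \<Longrightarrow> \<forall>b\<in>B. p b = q b"
proof -
  define excess where "excess b = p b * ln (p b / q b) - (p b - q b)" for b
  have excess_nonneg: "0 \<le> excess b" if "b \<in> B" for b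
  proof -
    have "p b - q b \<le> p b * ln (p b / q b)"
      using assms(2,3,6) that by (intro diff_le_mult_ln_div) auto
    then show ?thesis unfolding excess_def by simp
  qed
  have sum_excess: "(\<Sum>b\<in>B. p b * ln (p b / q b)) = (\<Sum>b\<in>B. excess b)"
    using assms unfolding excess_def by (simp add: sum_subtractf)
  show "0 \<le> (\<Sum>b\<in>B. p b * ln (p b / q b))"
    unfolding sum_excess using excess_nonneg by (simp add: sum_nonneg)
  assume "(\<Sum>b\<in>B. p b * ln (p b / q b)) = 0"
  then have excess_0: "excess b = 0" if "b \<in> B" for b
    unfolding sum_excess using sum_nonneg_eq_0_iff[OF assms(1)] excess_nonneg that by blast
  show "\<forall>b\<in>B. p b = q b"
  proof
    fix b assume "b \<in> B"
    then have "p b * ln (p b / q b) = p b - q b"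
      using excess_0 unfolding excess_def by simp
    then show "p b = q b"
      using mult_ln_div_eq_diff_imp_eq[of "p b" "q b"] assms(2,3,6) \<open>b \<in> B\<close> by blast
  qed
qed

lemma KL_eq_sum:
  assumes "\<not> (\<exists>x\<in>A. \<exists>y\<in>A. 0 < \<pi> x \<and> 0 < M x y \<and> L x y = 0)"
  shows "KL A \<pi> M L = ereal (\<Sum>x\<in>A. \<Sum>y\<in>A. \<pi> x * M x y * ln (M x y / L x y))"
  using assms unfolding KL_def by (auto intro!: sum.cong)

lemma KL_cong:
  assumes "\<forall>x\<in>A. \<forall>y\<in>A. M x y = M' x y \<and> L x y = L' x y"
  shows "KL A \<pi> M L = KL A \<pi> M' L'"
  using assms unfolding KL_def by (auto intro!: sum.cong)

lemma KL_self: "KL A \<pi> M M = 0"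
  by (subst KL_eq_sum) (auto intro!: sum.neutral)

lemma KL_nonneg:
  assumes "finite A" "stoch A M" "stoch A L" "\<forall>x\<in>A. 0 \<le> \<pi> x"
  shows "0 \<le> KL A \<pi> M L"
proof (cases "\<exists>x\<in>A. \<exists>y\<in>A. 0 < \<pi> x \<and> 0 < M x y \<and> L x y = 0")
  case abs_cont: False
  have "0 \<le> \<pi> x * (\<Sum>y\<in>A. M x y * ln (M x y / L x y))" if "x \<in> A" for x
  proof (cases "\<pi> x = 0")
    case False
    with that abs_cont assms have "0 \<le> (\<Sum>y\<in>A. M x y * ln (M x y / L x y))"
      by (intro gibbs_inequality(1)) (auto simp: stoch_def order.strict_iff_order)
    then show ?thesis using assms that by simp
  qed simp
  then show ?thesis
    using KL_eq_sum[OF abs_cont] by (simp add: sum_nonneg sum_distrib_left mult.assoc)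
qed (simp add: KL_def)

lemma KL_eq_0_imp_eq:
  assumes "finite A" "stoch A M" "stoch A L" "\<forall>x\<in>A. 0 < \<pi> x" "KL A \<pi> M L = 0"
  shows "\<forall>x\<in>A. \<forall>y\<in>A. M x y = L x y"
proof -
  have no_violation: "\<not> (\<exists>x\<in>A. \<exists>y\<in>A. 0 < \<pi> x \<and> 0 < M x y \<and> L x y = 0)"
  proof
    assume "\<exists>x\<in>A. \<exists>y\<in>A. 0 < \<pi> x \<and> 0 < M x y \<and> L x y = 0"
    then have "KL A \<pi> M L = \<infinity>" unfolding KL_def by simp
    then show False using assms(5) by simp
  qed
  then have abs_cont: "\<forall>x\<in>A. \<forall>y\<in>A. 0 < M x y \<longrightarrow> 0 < L x y"
    using assms(3,4) unfolding stoch_def by (force simp: order.strict_iff_order)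
  define row where "row x = (\<Sum>y\<in>A. M x y * ln (M x y / L x y))" for x
  have row_nonneg: "0 \<le> row x" if "x \<in> A" for x
    unfolding row_def using assms abs_cont that by (intro gibbs_inequality(1)) (auto simp: stoch_def)
  have "KL A \<pi> M L = ereal (\<Sum>x\<in>A. \<pi> x * row x)"
    using no_violation unfolding row_def by (simp add: KL_eq_sum sum_distrib_left mult.assoc)
  then have "(\<Sum>x\<in>A. \<pi> x * row x) = 0" using assms(5) by (simp add: zero_ereal_def)
  then have "\<forall>x\<in>A. \<pi> x * row x = 0"
    using sum_nonneg_eq_0_iff[OF assms(1), of "\<lambda>x. \<pi> x * row x"] row_nonneg assms(4)
    by (simp add: less_imp_le)
  then have row_0: "row x = 0" if "x \<in> A" for x using assms(4) that by force
  show ?thesis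
  proof
    fix x assume "x \<in> A"
    with assms(1-3) abs_cont row_0[OF \<open>x \<in> A\<close>] show "\<forall>y\<in>A. M x y = L x y"
      unfolding row_def stoch_def by (intro gibbs_inequality(2)) auto
  qed
qed

lemma tensor_eq_0_iff: "tensor d L x y = 0 \<longleftrightarrow> (\<exists>i<d. L i (x i) (y i) = 0)"
  unfolding tensor_def by auto

lemma tensor_pos: "\<forall>i<d. 0 < L i (x i) (y i) \<Longrightarrow> 0 < tensor d L x y"
  unfolding tensor_def by (intro prod_pos) auto

lemma ln_tensor:
  "\<forall>i<d. 0 < L i (x i) (y i) \<Longrightarrow> ln (tensor d L x y) = (\<Sum>i<d. ln (L i (x i) (y i)))"
  unfolding tensor_def by (subst ln_prod) auto

lemma tensor_cong:
  assumes "\<forall>i<d. \<forall>a\<in>S i. \<forall>b\<in>S i. L i a b = L' i a b"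
    and "x \<in> prodspace d S" "y \<in> prodspace d S"
  shows "tensor d L x y = tensor d L' x y"
  using assms unfolding tensor_def prodspace_def by (auto simp: PiE_iff intro!: prod.cong)

lemma sum_tensor_coord:
  assumes "\<forall>j<d. finite (S j)" "\<forall>j<d. stoch (S j) (L j)" "x \<in> prodspace d S" "i < d"
  shows "(\<Sum>y\<in>prodspace d S. tensor d L x y * h (y i)) = (\<Sum>b\<in>S i. L i (x i) b * h b)"
proof -
  define F where "F j b = (if j = i then L i (x i) b * h b else L j (x j) b)" for j b
  have "tensor d L x y * h (y i) = (\<Prod>j<d. F j (y j))" for y
  proof -
    have "(\<Prod>j<d. F j (y j)) = F i (y i) * (\<Prod>j\<in>{..<d}-{i}. L j (x j) (y j))"
      using assms(4) by (subst prod.remove[of _ i]) (auto simp: F_def intro!: prod.cong)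
    also have "tensor d L x y = L i (x i) (y i) * (\<Prod>j\<in>{..<d}-{i}. L j (x j) (y j))"
      unfolding tensor_def using assms(4) by (subst prod.remove[of _ i]) auto
    ultimately show ?thesis unfolding F_def by simp
  qed
  then have "(\<Sum>y\<in>prodspace d S. tensor d L x y * h (y i)) = (\<Sum>y\<in>PiE {..<d} S. \<Prod>j<d. F j (y j))"
    unfolding prodspace_def by simp
  also have "\<dots> = (\<Prod>j<d. \<Sum>b\<in>S j. F j b)"
    using assms(1) by (subst prod_sum_PiE) auto
  also have "\<dots> = (\<Sum>b\<in>S i. F i b) * (\<Prod>j\<in>{..<d}-{i}. \<Sum>b\<in>S j. F j b)"
    using assms(4) by (subst prod.remove[of _ i]) auto
  also have "(\<Prod>j\<in>{..<d}-{i}. \<Sum>b\<in>S j. F j b) = 1"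
    using assms(2,3) unfolding F_def stoch_def prodspace_def by (auto simp: PiE_iff intro!: prod.neutral)
  finally show ?thesis unfolding F_def by simp
qed

lemma tensor_nonneg:
  assumes "\<forall>i<d. \<forall>a\<in>S i. \<forall>b\<in>S i. 0 \<le> L i a b" "x \<in> prodspace d S" "y \<in> prodspace d S"
  shows "0 \<le> tensor d L x y"
  using assms unfolding tensor_def prodspace_def by (auto simp: PiE_iff intro!: prod_nonneg)

lemma sum_swap_nested:
  "(\<Sum>a\<in>A. \<Sum>b\<in>B. \<Sum>x\<in>C. \<Sum>y\<in>D. f a b x y) = (\<Sum>x\<in>C. \<Sum>y\<in>D. \<Sum>a\<in>A. \<Sum>b\<in>B. f a b x y)"
proof -
  have "(\<Sum>a\<in>A. \<Sum>b\<in>B. \<Sum>x\<in>C. \<Sum>y\<in>D. f a b x y) = (\<Sum>a\<in>A. \<Sum>x\<in>C. \<Sum>b\<in>B. \<Sum>y\<in>D. f a b x y)"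
    by (rule sum.cong[OF refl], rule sum.swap)
  also have "\<dots> = (\<Sum>x\<in>C. \<Sum>a\<in>A. \<Sum>b\<in>B. \<Sum>y\<in>D. f a b x y)"
    by (rule sum.swap)
  also have "\<dots> = (\<Sum>x\<in>C. \<Sum>a\<in>A. \<Sum>y\<in>D. \<Sum>b\<in>B. f a b x y)"
    by (rule sum.cong[OF refl], rule sum.cong[OF refl], rule sum.swap)
  also have "\<dots> = (\<Sum>x\<in>C. \<Sum>y\<in>D. \<Sum>a\<in>A. \<Sum>b\<in>B. f a b x y)"
    by (rule sum.cong[OF refl], rule sum.swap)
  finally show ?thesis .
qed

locale weighted_prodspace =
  fixes d :: nat and S :: "nat \<Rightarrow> 'a set" and \<pi> :: "(nat \<Rightarrow> 'a) \<Rightarrow> real"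
  assumes finite_factors: "\<forall>i<d. finite (S i)"
    and nonempty: "prodspace d S \<noteq> {}"
    and weights_pos: "\<forall>x\<in>prodspace d S. 0 < \<pi> x"
begin

abbreviation "X \<equiv> prodspace d S"
abbreviation "marg\<^sub>\<pi> \<equiv> marg d S \<pi>"
abbreviation "margP\<^sub>\<pi> \<equiv> margP d S \<pi>"

lemma finite_X: "finite X"
  unfolding prodspace_def using finite_factors by (intro finite_PiE) auto

lemma coord_mem: "x \<in> X \<Longrightarrow> i < d \<Longrightarrow> x i \<in> S i"
  unfolding prodspace_def by (auto simp: PiE_iff)

lemma exists_coord:
  assumes "i < d" "a \<in> S i"
  shows "\<exists>x\<in>X. x i = a"
proof -
  obtain x where "x \<in> X" using nonempty by auto
  then have "x(i := a) \<in> X"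
    using assms unfolding prodspace_def by (auto simp: PiE_iff extensional_def)
  then show ?thesis by (intro bexI[of _ "x(i := a)"]) auto
qed

lemma marg_pos:
  assumes "i < d" "a \<in> S i"
  shows "0 < marg\<^sub>\<pi> i a"
proof -
  obtain x where "x \<in> X" "x i = a" using exists_coord assms by blast
  then show ?thesis
    unfolding marg_def using finite_X weights_pos by (intro sum_pos2[of _ x]) auto
qed

lemma marg_mult_margP:
  "i < d \<Longrightarrow> a \<in> S i \<Longrightarrow> marg\<^sub>\<pi> i a * margP\<^sub>\<pi> Q i a b
    = (\<Sum>x\<in>X. \<Sum>y\<in>X. if x i = a \<and> y i = b then \<pi> x * Q x y else 0)"
  unfolding margP_def using marg_pos[of i a] by simp

lemma sum_weighted_coord:
  assumes "i < d"
  shows "(\<Sum>x\<in>X. \<pi> x * f (x i)) = (\<Sum>a\<in>S i. marg\<^sub>\<pi> i a * f a)"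
proof -
  have "(\<Sum>x\<in>X. \<pi> x * f (x i)) = (\<Sum>a\<in>S i. \<Sum>x\<in>{x\<in>X. x i = a}. \<pi> x * f (x i))"
    using finite_factors assms coord_mem by (intro sum.group[symmetric, OF finite_X]) auto
  also have "\<dots> = (\<Sum>a\<in>S i. marg\<^sub>\<pi> i a * f a)"
    unfolding marg_def sum_distrib_right by (intro sum.cong refl) auto
  finally show ?thesis .
qed

lemma sum_weighted_pair_coord:
  assumes "i < d"
  shows "(\<Sum>x\<in>X. \<Sum>y\<in>X. \<pi> x * Q x y * h (x i) (y i))
       = (\<Sum>a\<in>S i. \<Sum>b\<in>S i. marg\<^sub>\<pi> i a * margP\<^sub>\<pi> Q i a b * h a b)"
proof -
  have "(\<Sum>a\<in>S i. \<Sum>b\<in>S i. marg\<^sub>\<pi> i a * margP\<^sub>\<pi> Q i a b * h a b)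
      = (\<Sum>a\<in>S i. \<Sum>b\<in>S i. \<Sum>x\<in>X. \<Sum>y\<in>X.
           if x i = a \<and> y i = b then \<pi> x * Q x y * h (x i) (y i) else 0)"
    using assms by (auto simp: marg_mult_margP sum_distrib_right intro!: sum.cong)
  also have "\<dots> = (\<Sum>x\<in>X. \<Sum>y\<in>X. \<Sum>a\<in>S i. \<Sum>b\<in>S i.
           if x i = a \<and> y i = b then \<pi> x * Q x y * h (x i) (y i) else 0)"
    by (rule sum_swap_nested)
  also have "\<dots> = (\<Sum>x\<in>X. \<Sum>y\<in>X. \<pi> x * Q x y * h (x i) (y i))"
  proof (intro sum.cong refl)
    fix x y assume "x \<in> X" "y \<in> X"
    then have "x i \<in> S i" "y i \<in> S i" "finite (S i)"
      using assms coord_mem finite_factors by auto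
    have "(\<Sum>a\<in>S i. \<Sum>b\<in>S i. if x i = a \<and> y i = b then \<pi> x * Q x y * h (x i) (y i) else 0)
        = (\<Sum>a\<in>S i. if x i = a then \<Sum>b\<in>S i. if y i = b then \<pi> x * Q x y * h (x i) (y i) else 0 else 0)"
      by (intro sum.cong refl) auto
    also have "\<dots> = \<pi> x * Q x y * h (x i) (y i)"
      using \<open>x i \<in> S i\<close> \<open>y i \<in> S i\<close> \<open>finite (S i)\<close> by (simp add: sum.delta')
    finally show "(\<Sum>a\<in>S i. \<Sum>b\<in>S i. if x i = a \<and> y i = b then \<pi> x * Q x y * h (x i) (y i) else 0)
        = \<pi> x * Q x y * h (x i) (y i)" .
  qed
  finally show ?thesis by simp
qed

lemma sum_sum_weighted_pair_coord:
  "(\<Sum>x\<in>X. \<Sum>y\<in>X. \<Sum>i<d. \<pi> x * Q x y * h i (x i) (y i))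
     = (\<Sum>i<d. \<Sum>a\<in>S i. \<Sum>b\<in>S i. marg\<^sub>\<pi> i a * margP\<^sub>\<pi> Q i a b * h i a b)"
proof -
  have "(\<Sum>x\<in>X. \<Sum>y\<in>X. \<Sum>i<d. \<pi> x * Q x y * h i (x i) (y i))
      = (\<Sum>x\<in>X. \<Sum>i<d. \<Sum>y\<in>X. \<pi> x * Q x y * h i (x i) (y i))"
    by (rule sum.cong[OF refl], rule sum.swap)
  also have "\<dots> = (\<Sum>i<d. \<Sum>x\<in>X. \<Sum>y\<in>X. \<pi> x * Q x y * h i (x i) (y i))"
    by (rule sum.swap)
  also have "\<dots> = (\<Sum>i<d. \<Sum>a\<in>S i. \<Sum>b\<in>S i. marg\<^sub>\<pi> i a * margP\<^sub>\<pi> Q i a b * h i a b)"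
    by (intro sum.cong refl sum_weighted_pair_coord) simp
  finally show ?thesis .
qed

lemma margP_stoch:
  assumes Q: "stoch X Q" and i: "i < d"
  shows "stoch (S i) (margP\<^sub>\<pi> Q i)"
  unfolding stoch_def
proof (intro conjI ballI)
  fix a b assume "a \<in> S i" "b \<in> S i"
  then show "0 \<le> margP\<^sub>\<pi> Q i a b"
    unfolding margP_def using Q weights_pos marg_pos[OF i]
    by (intro divide_nonneg_pos sum_nonneg) (auto simp: stoch_def less_imp_le)
next
  fix a assume a: "a \<in> S i"
  have "marg\<^sub>\<pi> i a * (\<Sum>b\<in>S i. margP\<^sub>\<pi> Q i a b)
      = (\<Sum>a'\<in>S i. \<Sum>b\<in>S i. marg\<^sub>\<pi> i a' * margP\<^sub>\<pi> Q i a' b * (if a' = a then 1 else 0))"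
    using a finite_factors i by (simp add: sum_distrib_left if_distrib sum.If_cases)
  also have "\<dots> = (\<Sum>x\<in>X. \<Sum>y\<in>X. \<pi> x * Q x y * (if x i = a then 1 else 0))"
    using sum_weighted_pair_coord[OF i, of Q "\<lambda>a' b. if a' = a then 1 else 0"] by simp
  also have "\<dots> = (\<Sum>x\<in>X. \<pi> x * (if x i = a then 1 else 0))"
    using Q unfolding stoch_def
    by (intro sum.cong refl) (simp add: mult.assoc flip: sum_distrib_left sum_distrib_right)
  also have "\<dots> = marg\<^sub>\<pi> i a"
    using sum_weighted_coord[OF i, of "\<lambda>a'. if a' = a then 1 else 0"] a finite_factors i
    by (simp add: if_distrib sum.If_cases)
  finally show "(\<Sum>b\<in>S i. margP\<^sub>\<pi> Q i a b) = 1" using marg_pos[OF i a] by simp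
qed

lemma margP_pos_iff:
  assumes Q: "\<forall>x\<in>X. \<forall>y\<in>X. 0 \<le> Q x y" and i: "i < d" and a: "a \<in> S i"
  shows "0 < margP\<^sub>\<pi> Q i a b \<longleftrightarrow> (\<exists>x\<in>X. \<exists>y\<in>X. x i = a \<and> y i = b \<and> 0 < Q x y)"
proof -
  define t where "t x y = (if x i = a \<and> y i = b then \<pi> x * Q x y else 0)" for x y
  have t_nonneg: "0 \<le> t x y" if "x \<in> X" "y \<in> X" for x y
    unfolding t_def using Q weights_pos that by (simp add: less_imp_le)
  have t_pos_iff: "0 < t x y \<longleftrightarrow> x i = a \<and> y i = b \<and> 0 < Q x y" if "x \<in> X" "y \<in> X" for x y
    unfolding t_def using weights_pos that by (auto simp: zero_less_mult_iff)
  have row_nonneg: "0 \<le> (\<Sum>y\<in>X. t x y)" if "x \<in> X" for x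
    using t_nonneg that by (simp add: sum_nonneg)
  have "0 < margP\<^sub>\<pi> Q i a b \<longleftrightarrow> 0 < (\<Sum>x\<in>X. \<Sum>y\<in>X. t x y)"
    unfolding margP_def t_def using marg_pos[OF i a] by (simp add: zero_less_divide_iff)
  also have "\<dots> \<longleftrightarrow> \<not> (\<forall>x\<in>X. \<forall>y\<in>X. t x y = 0)"
    using finite_X t_nonneg row_nonneg
    by (simp add: order.strict_iff_order sum_nonneg sum_nonneg_eq_0_iff)
  also have "\<dots> \<longleftrightarrow> (\<exists>x\<in>X. \<exists>y\<in>X. 0 < t x y)"
    using t_nonneg by (force simp: order.strict_iff_order)
  finally show ?thesis using t_pos_iff by auto
qed

lemma margP_tensor:
  assumes L: "\<forall>j<d. stoch (S j) (L j)" and i: "i < d" and "a \<in> S i" "b \<in> S i"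
  shows "margP\<^sub>\<pi> (tensor d L) i a b = L i a b"
proof -
  have "marg\<^sub>\<pi> i a * margP\<^sub>\<pi> (tensor d L) i a b
      = (\<Sum>x\<in>X. \<pi> x * (if x i = a then \<Sum>y\<in>X. tensor d L x y * (if y i = b then 1 else 0) else 0))"
    using assms by (auto simp: marg_mult_margP sum_distrib_left intro!: sum.cong)
  also have "\<dots> = (\<Sum>x\<in>X. \<pi> x * (if x i = a then L i a b else 0))"
  proof (intro sum.cong refl)
    fix x assume "x \<in> X"
    have "(\<Sum>y\<in>X. tensor d L x y * (if y i = b then 1 else 0))
        = (\<Sum>b'\<in>S i. L i (x i) b' * (if b' = b then 1 else 0))"
      using sum_tensor_coord[OF finite_factors L \<open>x \<in> X\<close> i] .
    also have "\<dots> = L i (x i) b"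
      using \<open>b \<in> S i\<close> finite_factors[rule_format, OF i] by (simp add: if_distrib sum.If_cases)
    finally show "\<pi> x * (if x i = a then \<Sum>y\<in>X. tensor d L x y * (if y i = b then 1 else 0) else 0)
        = \<pi> x * (if x i = a then L i a b else 0)" by simp
  qed
  also have "\<dots> = marg\<^sub>\<pi> i a * L i a b"
    using sum_weighted_coord[OF i, of "\<lambda>a'. if a' = a then L i a b else 0"] \<open>a \<in> S i\<close>
      finite_factors[rule_format, OF i]
    by (simp add: if_distrib sum.If_cases)
  finally show ?thesis using marg_pos[OF i \<open>a \<in> S i\<close>] by simp
qed

lemma tensor_vanishes_on_support_iff:
  assumes Q: "\<forall>x\<in>X. \<forall>y\<in>X. 0 \<le> Q x y"
  shows "(\<exists>x\<in>X. \<exists>y\<in>X. 0 < Q x y \<and> tensor d L x y = 0)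
     \<longleftrightarrow> (\<exists>i<d. \<exists>a\<in>S i. \<exists>b\<in>S i. 0 < margP\<^sub>\<pi> Q i a b \<and> L i a b = 0)"
proof
  assume "\<exists>x\<in>X. \<exists>y\<in>X. 0 < Q x y \<and> tensor d L x y = 0"
  then obtain x y i where xy: "x \<in> X" "y \<in> X" "0 < Q x y" and i: "i < d" "L i (x i) (y i) = 0"
    unfolding tensor_eq_0_iff by blast
  moreover have "0 < margP\<^sub>\<pi> Q i (x i) (y i)"
    using margP_pos_iff[OF Q i(1) coord_mem[OF xy(1) i(1)]] xy by blast
  ultimately show "\<exists>i<d. \<exists>a\<in>S i. \<exists>b\<in>S i. 0 < margP\<^sub>\<pi> Q i a b \<and> L i a b = 0"
    using coord_mem by blast
next
  assume "\<exists>i<d. \<exists>a\<in>S i. \<exists>b\<in>S i. 0 < margP\<^sub>\<pi> Q i a b \<and> L i a b = 0"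
  then obtain i a b where "i < d" "a \<in> S i" "0 < margP\<^sub>\<pi> Q i a b" "L i a b = 0"
    by blast
  moreover obtain x y where "x \<in> X" "y \<in> X" "x i = a" "y i = b" "0 < Q x y"
    using margP_pos_iff[OF Q \<open>i < d\<close> \<open>a \<in> S i\<close>] \<open>0 < margP\<^sub>\<pi> Q i a b\<close> by blast
  ultimately show "\<exists>x\<in>X. \<exists>y\<in>X. 0 < Q x y \<and> tensor d L x y = 0"
    unfolding tensor_eq_0_iff by blast
qed

lemma tensor_margP_pos:
  assumes Q: "\<forall>x\<in>X. \<forall>y\<in>X. 0 \<le> Q x y" and xy: "x \<in> X" "y \<in> X" "0 < Q x y"
  shows "\<forall>i<d. 0 < margP\<^sub>\<pi> Q i (x i) (y i)" and "0 < tensor d (margP\<^sub>\<pi> Q) x y"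
proof -
  show *: "\<forall>i<d. 0 < margP\<^sub>\<pi> Q i (x i) (y i)"
    using margP_pos_iff[OF Q _ coord_mem[OF xy(1)]] xy by blast
  show "0 < tensor d (margP\<^sub>\<pi> Q) x y"
    using * by (rule tensor_pos)
qed

lemma KL_tensor_margP:
  assumes Q: "\<forall>x\<in>X. \<forall>y\<in>X. 0 \<le> Q x y"
  shows "KL X \<pi> Q (tensor d (margP\<^sub>\<pi> Q))
       = ereal (\<Sum>x\<in>X. \<Sum>y\<in>X. \<pi> x * Q x y * ln (Q x y / tensor d (margP\<^sub>\<pi> Q) x y))"
  using tensor_margP_pos(2)[OF Q] by (intro KL_eq_sum) force

lemma factors_pos_on_support:
  assumes Q: "\<forall>x\<in>X. \<forall>y\<in>X. 0 \<le> Q x y"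
    and abs_cont: "\<forall>i<d. \<forall>a\<in>S i. \<forall>b\<in>S i. 0 < margP\<^sub>\<pi> Q i a b \<longrightarrow> 0 < L i a b"
    and xy: "x \<in> X" "y \<in> X" "0 < Q x y"
  shows "\<forall>i<d. 0 < L i (x i) (y i)"
proof (intro allI impI)
  fix i assume "i < d"
  then have "0 < margP\<^sub>\<pi> Q i (x i) (y i)" "x i \<in> S i" "y i \<in> S i"
    using tensor_margP_pos(1)[OF Q xy] coord_mem xy by auto
  with abs_cont \<open>i < d\<close> show "0 < L i (x i) (y i)" by blast
qed

lemma ln_div_tensor_split:
  assumes Q: "\<forall>x\<in>X. \<forall>y\<in>X. 0 \<le> Q x y" and "x \<in> X" "y \<in> X" "0 < Q x y"
    and L: "\<forall>i<d. 0 < L i (x i) (y i)"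
  shows "ln (Q x y / tensor d L x y) = ln (Q x y / tensor d (margP\<^sub>\<pi> Q) x y)
           + (\<Sum>i<d. ln (margP\<^sub>\<pi> Q i (x i) (y i) / L i (x i) (y i)))"
proof -
  have N: "\<forall>i<d. 0 < margP\<^sub>\<pi> Q i (x i) (y i)" and "0 < tensor d (margP\<^sub>\<pi> Q) x y"
    using tensor_margP_pos[OF assms(1-4)] by blast+
  moreover have "0 < tensor d L x y" using L by (rule tensor_pos)
  moreover have "(\<Sum>i<d. ln (margP\<^sub>\<pi> Q i (x i) (y i) / L i (x i) (y i)))
      = (\<Sum>i<d. ln (margP\<^sub>\<pi> Q i (x i) (y i)) - ln (L i (x i) (y i)))"
    using N L by (intro sum.cong refl) (simp add: ln_divide_pos)
  ultimately show ?thesis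
    using N L \<open>0 < Q x y\<close> by (simp add: ln_divide_pos ln_tensor sum_subtractf)
qed

lemma sum_log_ratio_tensor_split:
  assumes Q: "\<forall>x\<in>X. \<forall>y\<in>X. 0 \<le> Q x y"
    and abs_cont: "\<forall>i<d. \<forall>a\<in>S i. \<forall>b\<in>S i. 0 < margP\<^sub>\<pi> Q i a b \<longrightarrow> 0 < L i a b"
  shows "(\<Sum>x\<in>X. \<Sum>y\<in>X. \<pi> x * Q x y * ln (Q x y / tensor d L x y))
       = (\<Sum>x\<in>X. \<Sum>y\<in>X. \<pi> x * Q x y * ln (Q x y / tensor d (margP\<^sub>\<pi> Q) x y))
         + (\<Sum>i<d. \<Sum>a\<in>S i. \<Sum>b\<in>S i.
              marg\<^sub>\<pi> i a * margP\<^sub>\<pi> Q i a b * ln (margP\<^sub>\<pi> Q i a b / L i a b))"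
proof -
  define N where "N = margP\<^sub>\<pi> Q"
  have "\<pi> x * Q x y * ln (Q x y / tensor d L x y)
      = \<pi> x * Q x y * ln (Q x y / tensor d N x y)
        + (\<Sum>i<d. \<pi> x * Q x y * ln (N i (x i) (y i) / L i (x i) (y i)))"
    if "x \<in> X" "y \<in> X" for x y
  proof (cases "Q x y = 0")
    case False
    with Q that have "0 < Q x y" by (simp add: order.strict_iff_order)
    with that show ?thesis unfolding N_def
      using ln_div_tensor_split[where L = L, OF Q that \<open>0 < Q x y\<close> factors_pos_on_support[OF Q abs_cont that]]
      by (simp add: distrib_left sum_distrib_left)
  qed simp
  then have "(\<Sum>x\<in>X. \<Sum>y\<in>X. \<pi> x * Q x y * ln (Q x y / tensor d L x y))
      = (\<Sum>x\<in>X. \<Sum>y\<in>X. \<pi> x * Q x y * ln (Q x y / tensor d N x y))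
        + (\<Sum>x\<in>X. \<Sum>y\<in>X. \<Sum>i<d. \<pi> x * Q x y * ln (N i (x i) (y i) / L i (x i) (y i)))"
    by (simp add: sum.distrib)
  also have "(\<Sum>x\<in>X. \<Sum>y\<in>X. \<Sum>i<d. \<pi> x * Q x y * ln (N i (x i) (y i) / L i (x i) (y i)))
      = (\<Sum>i<d. \<Sum>a\<in>S i. \<Sum>b\<in>S i. marg\<^sub>\<pi> i a * N i a b * ln (N i a b / L i a b))"
    unfolding N_def by (rule sum_sum_weighted_pair_coord)
  finally show ?thesis unfolding N_def .
qed

lemma KL_chain_rule:
  assumes Q: "\<forall>x\<in>X. \<forall>y\<in>X. 0 \<le> Q x y" and L: "\<forall>i<d. \<forall>a\<in>S i. \<forall>b\<in>S i. 0 \<le> L i a b"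
  shows "KL X \<pi> Q (tensor d L)
       = KL X \<pi> Q (tensor d (margP\<^sub>\<pi> Q)) + (\<Sum>i<d. KL (S i) (marg\<^sub>\<pi> i) (margP\<^sub>\<pi> Q i) (L i))"
proof (cases "\<exists>i<d. \<exists>a\<in>S i. \<exists>b\<in>S i. 0 < margP\<^sub>\<pi> Q i a b \<and> L i a b = 0")
  case True
  then obtain i where i: "i < d" "\<exists>a\<in>S i. \<exists>b\<in>S i. 0 < margP\<^sub>\<pi> Q i a b \<and> L i a b = 0"
    by blast
  then have "KL (S i) (marg\<^sub>\<pi> i) (margP\<^sub>\<pi> Q i) (L i) = \<infinity>"
    unfolding KL_def using marg_pos by auto
  then have "(\<Sum>i<d. KL (S i) (marg\<^sub>\<pi> i) (margP\<^sub>\<pi> Q i) (L i)) = \<infinity>"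
    using i by (auto simp: sum_Pinfty)
  moreover have "KL X \<pi> Q (tensor d L) = \<infinity>"
    using True tensor_vanishes_on_support_iff[OF Q, of L] weights_pos unfolding KL_def by force
  ultimately show ?thesis using KL_tensor_margP[OF Q] by simp
next
  case False
  have abs_cont: "\<forall>i<d. \<forall>a\<in>S i. \<forall>b\<in>S i. 0 < margP\<^sub>\<pi> Q i a b \<longrightarrow> 0 < L i a b"
  proof (intro allI impI ballI)
    fix i a b assume "i < d" "a \<in> S i" "b \<in> S i" "0 < margP\<^sub>\<pi> Q i a b"
    with False L have "L i a b \<noteq> 0" "0 \<le> L i a b" by blast+
    then show "0 < L i a b" by simp
  qed
  have "0 < tensor d L x y" if "x \<in> X" "y \<in> X" "0 < Q x y" for x y
    using factors_pos_on_support[OF Q abs_cont that] by (rule tensor_pos)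
  then have "KL X \<pi> Q (tensor d L) = ereal (\<Sum>x\<in>X. \<Sum>y\<in>X. \<pi> x * Q x y * ln (Q x y / tensor d L x y))"
    by (intro KL_eq_sum) force
  moreover have KL_i: "KL (S i) (marg\<^sub>\<pi> i) (margP\<^sub>\<pi> Q i) (L i)
      = ereal (\<Sum>a\<in>S i. \<Sum>b\<in>S i. marg\<^sub>\<pi> i a * margP\<^sub>\<pi> Q i a b * ln (margP\<^sub>\<pi> Q i a b / L i a b))"
    if "i < d" for i
    using False that by (intro KL_eq_sum) blast
  then have "(\<Sum>i<d. KL (S i) (marg\<^sub>\<pi> i) (margP\<^sub>\<pi> Q i) (L i))
      = (\<Sum>i<d. ereal (\<Sum>a\<in>S i. \<Sum>b\<in>S i.
            marg\<^sub>\<pi> i a * margP\<^sub>\<pi> Q i a b * ln (margP\<^sub>\<pi> Q i a b / L i a b)))"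
    by (intro sum.cong refl) (simp add: KL_i)
  ultimately show ?thesis
    using sum_log_ratio_tensor_split[OF Q abs_cont] KL_tensor_margP[OF Q] by simp
qed

lemma KL_tensor:
  assumes N: "\<forall>i<d. stoch (S i) (N i)" and L: "\<forall>i<d. \<forall>a\<in>S i. \<forall>b\<in>S i. 0 \<le> L i a b"
  shows "KL X \<pi> (tensor d N) (tensor d L) = (\<Sum>i<d. KL (S i) (marg\<^sub>\<pi> i) (N i) (L i))"
proof -
  have tensor_N_nonneg: "\<forall>x\<in>X. \<forall>y\<in>X. 0 \<le> tensor d N x y"
    using N by (intro ballI tensor_nonneg) (auto simp: stoch_def)
  have margP_N: "\<forall>i<d. \<forall>a\<in>S i. \<forall>b\<in>S i. margP\<^sub>\<pi> (tensor d N) i a b = N i a b"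
    using margP_tensor[OF N] by blast
  have "KL X \<pi> (tensor d N) (tensor d (margP\<^sub>\<pi> (tensor d N))) = KL X \<pi> (tensor d N) (tensor d N)"
    using margP_N by (intro KL_cong) (auto intro: tensor_cong)
  moreover have "KL (S i) (marg\<^sub>\<pi> i) (margP\<^sub>\<pi> (tensor d N) i) (L i) = KL (S i) (marg\<^sub>\<pi> i) (N i) (L i)"
    if "i < d" for i
    using margP_N that by (intro KL_cong) auto
  ultimately show ?thesis
    using KL_chain_rule[OF tensor_N_nonneg L] by (simp add: KL_self)
qed

lemma pythagorean_identity:
  assumes P: "stoch X P" and L: "\<forall>i<d. stoch (S i) (L i)"
  shows "KL X \<pi> P (tensor d L)
           = KL X \<pi> P (tensor d (margP\<^sub>\<pi> P)) + KL X \<pi> (tensor d (margP\<^sub>\<pi> P)) (tensor d L)"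
    and "KL X \<pi> P (tensor d L)
           = KL X \<pi> P (tensor d (margP\<^sub>\<pi> P)) + (\<Sum>i<d. KL (S i) (marg\<^sub>\<pi> i) (margP\<^sub>\<pi> P i) (L i))"
proof -
  have L_nonneg: "\<forall>i<d. \<forall>a\<in>S i. \<forall>b\<in>S i. 0 \<le> L i a b"
    using L by (simp add: stoch_def)
  show *: "KL X \<pi> P (tensor d L)
           = KL X \<pi> P (tensor d (margP\<^sub>\<pi> P)) + (\<Sum>i<d. KL (S i) (marg\<^sub>\<pi> i) (margP\<^sub>\<pi> P i) (L i))"
    using P L_nonneg by (intro KL_chain_rule) (auto simp: stoch_def)
  show "KL X \<pi> P (tensor d L)
           = KL X \<pi> P (tensor d (margP\<^sub>\<pi> P)) + KL X \<pi> (tensor d (margP\<^sub>\<pi> P)) (tensor d L)"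
    unfolding * using KL_tensor[OF _ L_nonneg] margP_stoch[OF P] by simp
qed

lemma KL_marginal_nonneg:
  assumes P: "stoch X P" and L: "\<forall>i<d. stoch (S i) (L i)" and "i < d"
  shows "0 \<le> KL (S i) (marg\<^sub>\<pi> i) (margP\<^sub>\<pi> P i) (L i)"
  using assms finite_factors margP_stoch marg_pos by (intro KL_nonneg) (auto simp: less_imp_le)

lemma Iinfo_eq_KL_tensor_margP:
  assumes P: "stoch X P"
  shows "Iinfo d S \<pi> P = KL X \<pi> P (tensor d (margP\<^sub>\<pi> P))"
  unfolding Iinfo_def
proof (rule antisym)
  show "Inf {KL X \<pi> P (tensor d Ls) |Ls. \<forall>i<d. stoch (S i) (Ls i)} \<le> KL X \<pi> P (tensor d (margP\<^sub>\<pi> P))"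
    using margP_stoch[OF P] by (intro Inf_lower) blast
  have "KL X \<pi> P (tensor d (margP\<^sub>\<pi> P)) \<le> KL X \<pi> P (tensor d Ls)" if "\<forall>i<d. stoch (S i) (Ls i)" for Ls
    unfolding pythagorean_identity(2)[OF P that]
    using KL_marginal_nonneg[OF P that] by (intro add_increasing2 sum_nonneg) auto
  then show "KL X \<pi> P (tensor d (margP\<^sub>\<pi> P)) \<le> Inf {KL X \<pi> P (tensor d Ls) |Ls. \<forall>i<d. stoch (S i) (Ls i)}"
    by (intro Inf_greatest) blast
qed

lemma KL_eq_Iinfo_imp_margP:
  assumes P: "stoch X P" and L: "\<forall>i<d. stoch (S i) (L i)"
    and min: "KL X \<pi> P (tensor d L) = Iinfo d S \<pi> P"
  shows "\<forall>i<d. \<forall>a\<in>S i. \<forall>b\<in>S i. L i a b = margP\<^sub>\<pi> P i a b"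
proof -
  obtain r where r: "KL X \<pi> P (tensor d (margP\<^sub>\<pi> P)) = ereal r"
    using KL_tensor_margP P unfolding stoch_def by blast
  have "ereal r + (\<Sum>i<d. KL (S i) (marg\<^sub>\<pi> i) (margP\<^sub>\<pi> P i) (L i)) = ereal r"
    using min pythagorean_identity(2)[OF P L] Iinfo_eq_KL_tensor_margP[OF P] r by simp
  then have "(\<Sum>i<d. KL (S i) (marg\<^sub>\<pi> i) (margP\<^sub>\<pi> P i) (L i)) = 0"
    by (cases "\<Sum>i<d. KL (S i) (marg\<^sub>\<pi> i) (margP\<^sub>\<pi> P i) (L i)") auto
  then have KL_i_0: "\<forall>i<d. KL (S i) (marg\<^sub>\<pi> i) (margP\<^sub>\<pi> P i) (L i) = 0"
    using sum_nonneg_eq_0_iff[of "{..<d}" "\<lambda>i. KL (S i) (marg\<^sub>\<pi> i) (margP\<^sub>\<pi> P i) (L i)"]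
      KL_marginal_nonneg[OF P L] by simp
  show ?thesis
  proof (intro allI impI)
    fix i assume i: "i < d"
    have "\<forall>a\<in>S i. 0 < marg\<^sub>\<pi> i a" using marg_pos[OF i] by blast
    from KL_eq_0_imp_eq[OF finite_factors[rule_format, OF i] margP_stoch[OF P i]
        L[rule_format, OF i] this KL_i_0[rule_format, OF i]]
    show "\<forall>a\<in>S i. \<forall>b\<in>S i. L i a b = margP\<^sub>\<pi> P i a b" by simp
  qed
qed

end

lemma stoch_dual:
  assumes "stoch A P" "stationary A \<pi> P" "\<forall>x\<in>A. 0 < \<pi> x"
  shows "stoch A (dual \<pi> P)"
  using assms unfolding stoch_def stationary_def dual_def
  by (auto simp: sum_divide_distrib[symmetric] less_imp_le)

lemma KL_dual:
  assumes pos: "\<forall>x\<in>A. 0 < \<pi> x"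
  shows "KL A \<pi> (dual \<pi> M) (dual \<pi> L) = KL A \<pi> M L"
proof -
  have dual_pos_iff: "0 < dual \<pi> M x y \<longleftrightarrow> 0 < M y x" and dual_eq_0_iff: "dual \<pi> L x y = 0 \<longleftrightarrow> L y x = 0"
    if "x \<in> A" "y \<in> A" for x y
    using pos that by (auto simp: dual_def zero_less_mult_iff zero_less_divide_iff)
  show ?thesis
  proof (cases "\<exists>x\<in>A. \<exists>y\<in>A. 0 < \<pi> x \<and> 0 < M x y \<and> L x y = 0")
    case True
    then obtain x y where "x \<in> A" "y \<in> A" "0 < M x y" "L x y = 0" by blast
    then have "\<exists>x\<in>A. \<exists>y\<in>A. 0 < \<pi> x \<and> 0 < dual \<pi> M x y \<and> dual \<pi> L x y = 0"
      using pos dual_pos_iff dual_eq_0_iff by blast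
    then show ?thesis using True unfolding KL_def by simp
  next
    case False
    then have "\<not> (\<exists>x\<in>A. \<exists>y\<in>A. 0 < \<pi> x \<and> 0 < dual \<pi> M x y \<and> dual \<pi> L x y = 0)"
      using pos dual_pos_iff dual_eq_0_iff by metis
    then have "KL A \<pi> (dual \<pi> M) (dual \<pi> L)
        = ereal (\<Sum>x\<in>A. \<Sum>y\<in>A. \<pi> x * dual \<pi> M x y * ln (dual \<pi> M x y / dual \<pi> L x y))"
      by (rule KL_eq_sum)
    also have "(\<Sum>x\<in>A. \<Sum>y\<in>A. \<pi> x * dual \<pi> M x y * ln (dual \<pi> M x y / dual \<pi> L x y))
        = (\<Sum>x\<in>A. \<Sum>y\<in>A. \<pi> y * M y x * ln (M y x / L y x))"
    proof (intro sum.cong refl)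
      fix x y assume "x \<in> A" "y \<in> A"
      with pos have "\<pi> x \<noteq> 0" "\<pi> y \<noteq> 0" by auto
      then show "\<pi> x * dual \<pi> M x y * ln (dual \<pi> M x y / dual \<pi> L x y)
          = \<pi> y * M y x * ln (M y x / L y x)" by (simp add: dual_def)
    qed
    also have "\<dots> = (\<Sum>y\<in>A. \<Sum>x\<in>A. \<pi> y * M y x * ln (M y x / L y x))"
      by (rule sum.swap)
    finally show ?thesis using False by (simp add: KL_eq_sum)
  qed
qed

lemma tensor_dual:
  assumes "\<forall>x\<in>prodspace d S. \<pi> x = (\<Prod>i<d. \<rho> i (x i))" "x \<in> prodspace d S" "y \<in> prodspace d S"
  shows "tensor d (\<lambda>i. dual (\<rho> i) (N i)) x y = dual \<pi> (tensor d N) x y"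
  using assms unfolding tensor_def dual_def by (simp add: prod.distrib prod_dividef)

context weighted_prodspace
begin

lemma margP_dual:
  assumes i: "i < d" and a: "a \<in> S i" and b: "b \<in> S i"
  shows "margP\<^sub>\<pi> (dual \<pi> Q) i a b = dual (marg\<^sub>\<pi> i) (margP\<^sub>\<pi> Q i) a b"
proof -
  have "marg\<^sub>\<pi> i a * margP\<^sub>\<pi> (dual \<pi> Q) i a b
      = (\<Sum>x\<in>X. \<Sum>y\<in>X. if y i = b \<and> x i = a then \<pi> y * Q y x else 0)"
    unfolding marg_mult_margP[OF i a] dual_def using weights_pos by (intro sum.cong refl) auto
  also have "\<dots> = marg\<^sub>\<pi> i b * margP\<^sub>\<pi> Q i b a"
    unfolding marg_mult_margP[OF i b] by (rule sum.swap)
  finally show ?thesis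
    using marg_pos[OF i a] unfolding dual_def by (simp add: field_simps)
qed

lemma Iinfo_dual:
  assumes P: "stoch X P" and stat: "stationary X \<pi> P"
    and prod: "\<forall>x\<in>X. \<pi> x = (\<Prod>i<d. marg\<^sub>\<pi> i (x i))"
  shows "Iinfo d S \<pi> (dual \<pi> P) = Iinfo d S \<pi> P"
proof -
  have "tensor d (margP\<^sub>\<pi> (dual \<pi> P)) x y = dual \<pi> (tensor d (margP\<^sub>\<pi> P)) x y"
    if "x \<in> X" "y \<in> X" for x y
  proof -
    have "tensor d (margP\<^sub>\<pi> (dual \<pi> P)) x y = tensor d (\<lambda>i. dual (marg\<^sub>\<pi> i) (margP\<^sub>\<pi> P i)) x y"
      using margP_dual by (intro tensor_cong[OF _ that]) blast
    also have "\<dots> = dual \<pi> (tensor d (margP\<^sub>\<pi> P)) x y"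
      by (rule tensor_dual[OF prod that])
    finally show ?thesis .
  qed
  then have "KL X \<pi> (dual \<pi> P) (tensor d (margP\<^sub>\<pi> (dual \<pi> P)))
      = KL X \<pi> (dual \<pi> P) (dual \<pi> (tensor d (margP\<^sub>\<pi> P)))"
    by (intro KL_cong) simp
  also have "\<dots> = KL X \<pi> P (tensor d (margP\<^sub>\<pi> P))"
    using weights_pos by (rule KL_dual)
  finally show ?thesis
    using Iinfo_eq_KL_tensor_margP P stoch_dual[OF P stat weights_pos] by simp
qed

end

theorem theorem2p9:
  fixes d :: nat and S :: "nat \<Rightarrow> 'a set"
    and P :: "(nat \<Rightarrow> 'a) \<Rightarrow> (nat \<Rightarrow> 'a) \<Rightarrow> real"
    and Ls :: "nat \<Rightarrow> 'a \<Rightarrow> 'a \<Rightarrow> real"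
  assumes fin: "\<forall>i<d. finite (S i)"
    and P_stoch: "stoch (prodspace d S) P"
    and L_stoch: "\<forall>i<d. stoch (S i) (Ls i)"
  shows
    "(\<forall>\<pi>. pmass (prodspace d S) \<pi> \<and> (\<forall>x\<in>prodspace d S. 0 < \<pi> x) \<longrightarrow>
        KL (prodspace d S) \<pi> P (tensor d Ls)
          = KL (prodspace d S) \<pi> P (tensor d (margP d S \<pi> P))
            + KL (prodspace d S) \<pi> (tensor d (margP d S \<pi> P)) (tensor d Ls)
      \<and> KL (prodspace d S) \<pi> P (tensor d Ls)
          = KL (prodspace d S) \<pi> P (tensor d (margP d S \<pi> P))
            + (\<Sum>i<d. KL (S i) (marg d S \<pi> i) (margP d S \<pi> P i) (Ls i))
      \<and> (\<forall>i<d. stoch (S i) (margP d S \<pi> P i))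
      \<and> (\<forall>Ls'. (\<forall>i<d. stoch (S i) (Ls' i))
            \<and> KL (prodspace d S) \<pi> P (tensor d Ls') = Iinfo d S \<pi> P
            \<longrightarrow> (\<forall>i<d. \<forall>a\<in>S i. \<forall>b\<in>S i. Ls' i a b = margP d S \<pi> P i a b))
      \<and> Iinfo d S \<pi> P = KL (prodspace d S) \<pi> P (tensor d (margP d S \<pi> P)))
   \<and> (\<forall>\<pi>. pmass (prodspace d S) \<pi> \<and> (\<forall>x\<in>prodspace d S. 0 < \<pi> x)
        \<and> (\<forall>x\<in>prodspace d S. \<pi> x = (\<Prod>i<d. marg d S \<pi> i (x i)))
        \<and> stationary (prodspace d S) \<pi> P
      \<longrightarrow> Iinfo d S \<pi> P = Iinfo d S \<pi> (dual \<pi> P))"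
proof ((rule conjI; intro allI impI), goal_cases)
  case (1 \<pi>)
  then interpret weighted_prodspace d S \<pi>
    using fin by unfold_locales (auto simp: pmass_def)
  show ?case
    using pythagorean_identity[OF P_stoch L_stoch] margP_stoch[OF P_stoch]
      KL_eq_Iinfo_imp_margP[OF P_stoch] Iinfo_eq_KL_tensor_margP[OF P_stoch]
    by blast
next
  case (2 \<pi>)
  then interpret weighted_prodspace d S \<pi>
    using fin by unfold_locales (auto simp: pmass_def)
  show ?case
    using 2 Iinfo_dual[OF P_stoch] by simp
qed

end
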